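(* A graph $G$ admits a straight-line drawing with spanning ratio equal to $1$ if and only if $G$ contains a Hamiltonian path.
   Context: A drawing of a graph maps each vertex to a distinct point of the plane and each edge to a Jordan arc between its end-vertices; it is straight-line if every edge is drawn as the straight-line segment between its end-vertices (edges may pass through other vertices). In a straight-line drawing $\Gamma$, the length of a path is the sum of the Euclidean lengths of its edges, $\pi_\Gamma(u,v)$ is the minimum length of a path between $u$ and $v$, and $\|uv\|_\Gamma$ is the Euclidean distance between the points representing $u$ and $v$. The spanning ratio of $\Gamma$ is $\max_{u\neq v} \pi_\Gamma(u,v)/\|uv\|_\Gamma$ over all pairs of distinct vertices. *)

theory Defs
  imports "HOL-Analysis.Analysis"
begin

definition graph :: "'a set \<Rightarrow> 'a set set \<Rightarrow> bool" where
  "graph V E \<longleftrightarrow> finite V \<and> (\<forall>e\<in>E. \<exists>u v. u \<in> V \<and> v \<in> V \<and> u \<noteq> v \<and> e = {u, v})"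

definition is_path :: "'a set \<Rightarrow> 'a set set \<Rightarrow> 'a list \<Rightarrow> bool" where
  "is_path V E ps \<longleftrightarrow> ps \<noteq> [] \<and> distinct ps \<and> set ps \<subseteq> V \<and>
     (\<forall>i. Suc i < length ps \<longrightarrow> {ps ! i, ps ! Suc i} \<in> E)"

definition hamiltonian_path :: "'a set \<Rightarrow> 'a set set \<Rightarrow> 'a list \<Rightarrow> bool" where
  "hamiltonian_path V E ps \<longleftrightarrow> is_path V E ps \<and> set ps = V"

text \<open>A straight-line drawing: vertices mapped to distinct points of the plane;
  each edge is drawn as the segment between its end-points (so the drawing is
  determined by the vertex positions).\<close>
definition straight_line_drawing :: "'a set \<Rightarrow> ('a \<Rightarrow> real^2) \<Rightarrow> bool" where
  "straight_line_drawing V \<Gamma> \<longleftrightarrow> inj_on \<Gamma> V"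

definition path_len :: "('a \<Rightarrow> real^2) \<Rightarrow> 'a list \<Rightarrow> real" where
  "path_len \<Gamma> ps = (\<Sum>i<length ps - 1. dist (\<Gamma> (ps ! i)) (\<Gamma> (ps ! Suc i)))"

text \<open>Minimum length of a path between u and v (\<infinity> if there is none).\<close>
definition pi_dist :: "'a set \<Rightarrow> 'a set set \<Rightarrow> ('a \<Rightarrow> real^2) \<Rightarrow> 'a \<Rightarrow> 'a \<Rightarrow> ereal" where
  "pi_dist V E \<Gamma> u v = (INF ps \<in> {ps. is_path V E ps \<and> hd ps = u \<and> last ps = v}. ereal (path_len \<Gamma> ps))"

definition spanning_ratio :: "'a set \<Rightarrow> 'a set set \<Rightarrow> ('a \<Rightarrow> real^2) \<Rightarrow> ereal" where
  "spanning_ratio V E \<Gamma> = (SUP (u, v) \<in> {(u, v). u \<in> V \<and> v \<in> V \<and> u \<noteq> v}.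
       pi_dist V E \<Gamma> u v / ereal (dist (\<Gamma> u) (\<Gamma> v)))"

end

theory Submission
  imports Defs
begin

(* If v_0 ... v_n is a Hamiltonian path, draw v_k at the point (k, 0): the subpath from v_i to
   v_j is then exactly as long as the segment between them, so the spanning ratio is 1.
   Conversely, if the spanning ratio is 1, then (there being only finitely many paths) any two
   vertices u, v are joined by a path of length |uv|, and by the triangle inequality every vertex
   of that path is drawn on the segment uv. Order the vertices by a linear functional that is
   injective on the drawing. Two consecutive vertices a, b are adjacent, since an inner vertex of
   such a path from a to b would be mapped strictly between them; so the order is a Hamiltonian
   path. *)

lemma ex_linear_inj_on_finite:
  fixes S :: "(real^2) set"
  assumes "finite S"
  obtains f :: "real^2 \<Rightarrow> real" where "linear f" "inj_on f S"
proof -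
  let ?slopes = "(\<lambda>(p, q). (p $ 1 - q $ 1) / (q $ 2 - p $ 2)) ` (S \<times> S)"
  obtain c where c: "c \<notin> ?slopes"
    using ex_new_if_finite[OF infinite_UNIV_char_0, of ?slopes] assms by blast
  have "linear (\<lambda>p :: real^2. p $ 1 + c * p $ 2)"
    by (rule linearI) (simp_all add: algebra_simps)
  moreover have "inj_on (\<lambda>p. p $ 1 + c * p $ 2) S"
  proof (rule inj_onI)
    fix p q assume pq: "p \<in> S" "q \<in> S" "p $ 1 + c * p $ 2 = q $ 1 + c * q $ 2"
    show "p = q"
    proof (cases "p $ 2 = q $ 2")
      case True
      then show ?thesis
        using pq(3) by (simp add: vec_eq_iff forall_2)
    next
      case False
      then have "c = (p $ 1 - q $ 1) / (q $ 2 - p $ 2)"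
        using pq(3) by (simp add: field_simps)
      then show ?thesis
        using c pq(1,2) by auto
    qed
  qed
  ultimately show ?thesis
    using that by blast
qed

lemma sorted_nth_Suc_gap:
  fixes xs :: "'a::linorder list"
  assumes "sorted xs" and "Suc i < length xs" and "x \<in> set xs"
  shows "x \<le> xs ! i \<or> xs ! Suc i \<le> x"
proof -
  obtain k where "k < length xs" "x = xs ! k"
    using assms(3) by (auto simp: in_set_conv_nth)
  then show ?thesis
    using sorted_nth_mono[OF assms(1)] assms(2) by (cases "k \<le> i") auto
qed

lemma path_len_Nil [simp]: "path_len \<Gamma> [] = 0"
  and path_len_singleton [simp]: "path_len \<Gamma> [a] = 0"
  by (simp_all add: path_len_def)

lemma path_len_Cons_Cons [simp]:
  "path_len \<Gamma> (a # b # ps) = dist (\<Gamma> a) (\<Gamma> b) + path_len \<Gamma> (b # ps)"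
  unfolding path_len_def by (simp add: sum.lessThan_Suc_shift del: sum.lessThan_Suc)

lemma dist_add_dist_le_path_len:
  "z \<in> set ps \<Longrightarrow> dist (\<Gamma> (hd ps)) (\<Gamma> z) + dist (\<Gamma> z) (\<Gamma> (last ps)) \<le> path_len \<Gamma> ps"
proof (induction ps arbitrary: z rule: induct_list012)
  case (3 a b ps)
  have IH: "dist (\<Gamma> b) (\<Gamma> y) + dist (\<Gamma> y) (\<Gamma> (last (b # ps))) \<le> path_len \<Gamma> (b # ps)"
    if "y \<in> set (b # ps)" for y
    using "3.IH"(2) that by simp
  show ?case
  proof (cases "z = a")
    case True
    then show ?thesis
      using IH[of b] dist_triangle[of "\<Gamma> a" "\<Gamma> (last (b # ps))" "\<Gamma> b"] by simp
  next
    case False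
    then show ?thesis
      using IH[of z] "3.prems" dist_triangle[of "\<Gamma> a" "\<Gamma> z" "\<Gamma> b"] by simp
  qed
qed auto

lemma dist_le_path_len: "ps \<noteq> [] \<Longrightarrow> dist (\<Gamma> (hd ps)) (\<Gamma> (last ps)) \<le> path_len \<Gamma> ps"
  using dist_add_dist_le_path_len[of "hd ps" ps \<Gamma>] by simp

lemma on_segment_if_path_len_le_dist:
  assumes "path_len \<Gamma> ps \<le> dist (\<Gamma> (hd ps)) (\<Gamma> (last ps))" and "z \<in> set ps"
  shows "\<Gamma> z \<in> closed_segment (\<Gamma> (hd ps)) (\<Gamma> (last ps))"
proof -
  have "dist (\<Gamma> (hd ps)) (\<Gamma> (last ps)) = dist (\<Gamma> (hd ps)) (\<Gamma> z) + dist (\<Gamma> z) (\<Gamma> (last ps))"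
    using dist_add_dist_le_path_len[OF assms(2), of \<Gamma>] assms(1)
      dist_triangle[of "\<Gamma> (hd ps)" "\<Gamma> (last ps)" "\<Gamma> z"] by linarith
  then show ?thesis
    by (simp add: between flip: between_mem_segment)
qed

lemma path_len_snoc_snoc:
  "path_len \<Gamma> (ps @ [a, b]) = path_len \<Gamma> (ps @ [a]) + dist (\<Gamma> a) (\<Gamma> b)"
  by (induction ps rule: induct_list012) simp_all

lemma path_len_rev: "path_len \<Gamma> (rev ps) = path_len \<Gamma> ps"
proof (induction ps rule: induct_list012)
  case (3 a b ps)
  then show ?case
    using path_len_snoc_snoc[of \<Gamma> "rev ps" b a] by (simp add: dist_commute)
qed simp_all

lemma is_path_rev: "is_path V E ps \<Longrightarrow> is_path V E (rev ps)"
  unfolding is_path_def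
proof safe
  fix i
  assume edges: "\<forall>i. Suc i < length ps \<longrightarrow> {ps ! i, ps ! Suc i} \<in> E"
    and i: "Suc i < length (rev ps)"
  let ?k = "length ps - 2 - i"
  have "rev ps ! i = ps ! Suc ?k" "rev ps ! Suc i = ps ! ?k"
    using i by (auto simp: rev_nth Suc_diff_Suc numeral_2_eq_2)
  then show "{rev ps ! i, rev ps ! Suc i} \<in> E"
    using edges i by (simp add: insert_commute)
qed auto

lemma is_path_take_drop:
  assumes "is_path V E ps" and "i \<le> j" and "j < length ps"
  shows "is_path V E (take (Suc (j - i)) (drop i ps))"
  using assms unfolding is_path_def
  by (auto dest: in_set_takeD in_set_dropD)

lemma path_len_take_drop:
  assumes "i \<le> j" and "j < length ps"
  shows "path_len \<Gamma> (take (Suc (j - i)) (drop i ps)) =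
    (\<Sum>k<j - i. dist (\<Gamma> (ps ! (i + k))) (\<Gamma> (ps ! Suc (i + k))))"
  using assms unfolding path_len_def by (intro sum.cong) auto

lemma edge_if_path_set_subset_ends:
  assumes "is_path V E ps" "hd ps = a" "last ps = b" "a \<noteq> b" "set ps \<subseteq> {a, b}"
  shows "{a, b} \<in> E"
proof -
  have "length ps = card (set ps)"
    using assms(1) by (simp add: is_path_def distinct_card)
  also have "\<dots> \<le> 2"
    using card_mono[OF _ assms(5)] assms(4) by simp
  finally have "length ps \<le> 2" .
  moreover have "ps \<noteq> []" "\<forall>x. ps \<noteq> [x]"
    using assms(1-4) by (auto simp: is_path_def)
  ultimately obtain x y where "ps = [x, y]"
    by (auto simp: numeral_2_eq_2 length_Suc_conv le_Suc_eq)
  then show ?thesis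
    using assms(1-3) unfolding is_path_def by force
qed

lemma dist_le_pi_dist: "ereal (dist (\<Gamma> u) (\<Gamma> v)) \<le> pi_dist V E \<Gamma> u v"
  unfolding pi_dist_def
proof (rule INF_greatest)
  fix ps assume "ps \<in> {ps. is_path V E ps \<and> hd ps = u \<and> last ps = v}"
  then show "ereal (dist (\<Gamma> u) (\<Gamma> v)) \<le> ereal (path_len \<Gamma> ps)"
    using dist_le_path_len[of ps \<Gamma>] by (auto simp: is_path_def)
qed

lemma pi_dist_le_path_len:
  "is_path V E ps \<Longrightarrow> pi_dist V E \<Gamma> (hd ps) (last ps) \<le> ereal (path_len \<Gamma> ps)"
  unfolding pi_dist_def by (auto intro: INF_lower)

lemma pi_dist_commute: "pi_dist V E \<Gamma> u v = pi_dist V E \<Gamma> v u"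
proof -
  have "pi_dist V E \<Gamma> u v \<le> pi_dist V E \<Gamma> v u" for u v
    unfolding pi_dist_def
  proof (rule INF_greatest)
    fix ps assume "ps \<in> {ps. is_path V E ps \<and> hd ps = v \<and> last ps = u}"
    then have "is_path V E (rev ps)" "hd (rev ps) = u" "last (rev ps) = v"
      by (auto simp: is_path_rev hd_rev last_rev)
    then show "(INF qs\<in>{qs. is_path V E qs \<and> hd qs = u \<and> last qs = v}. ereal (path_len \<Gamma> qs))
        \<le> ereal (path_len \<Gamma> ps)"
      by (intro INF_lower2[of "rev ps"]) (auto simp: path_len_rev)
  qed
  then show ?thesis by (metis antisym)
qed

lemma finite_paths: "finite V \<Longrightarrow> finite {ps. is_path V E ps}"
  by (rule finite_subset[OF _ finite_subset_distinct]) (auto simp: is_path_def)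

lemma pi_dist_attained:
  assumes "finite V" and "pi_dist V E \<Gamma> u v \<noteq> \<infinity>"
  obtains ps where "is_path V E ps" "hd ps = u" "last ps = v"
    "pi_dist V E \<Gamma> u v = ereal (path_len \<Gamma> ps)"
proof -
  let ?S = "{ps. is_path V E ps \<and> hd ps = u \<and> last ps = v}"
  have "finite ?S"
    using finite_paths[OF assms(1)] by (rule finite_subset[rotated]) auto
  moreover have "?S \<noteq> {}"
  proof
    assume "?S = {}"
    then have "pi_dist V E \<Gamma> u v = \<infinity>"
      unfolding pi_dist_def by (simp only: INF_empty top_ereal_def)
    then show False
      using assms(2) by simp
  qed
  ultimately have "pi_dist V E \<Gamma> u v \<in> (\<lambda>ps. ereal (path_len \<Gamma> ps)) ` ?S"
    unfolding pi_dist_def by (simp add: cInf_eq_Min)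
  then show ?thesis
    using that by blast
qed

(* The pair x, y is needed: over no pairs at all the supremum would be -\<infinity>. *)
lemma spanning_ratio_eq_1_iff:
  assumes inj: "inj_on \<Gamma> V" and "x \<in> V" "y \<in> V" "x \<noteq> y"
  shows "spanning_ratio V E \<Gamma> = 1 \<longleftrightarrow>
    (\<forall>u\<in>V. \<forall>v\<in>V. u \<noteq> v \<longrightarrow> pi_dist V E \<Gamma> u v = ereal (dist (\<Gamma> u) (\<Gamma> v)))"
proof -
  let ?P = "{(u, v). u \<in> V \<and> v \<in> V \<and> u \<noteq> v}"
  let ?r = "\<lambda>(u, v). pi_dist V E \<Gamma> u v / ereal (dist (\<Gamma> u) (\<Gamma> v))"
  have ratio: "1 \<le> ?r (u, v)"
    "?r (u, v) \<le> 1 \<longleftrightarrow> pi_dist V E \<Gamma> u v = ereal (dist (\<Gamma> u) (\<Gamma> v))"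
    if "u \<in> V" "v \<in> V" "u \<noteq> v" for u v
  proof -
    have "dist (\<Gamma> u) (\<Gamma> v) > 0"
      using inj that by (auto simp: inj_on_def)
    then show "1 \<le> ?r (u, v)" "?r (u, v) \<le> 1 \<longleftrightarrow> pi_dist V E \<Gamma> u v = ereal (dist (\<Gamma> u) (\<Gamma> v))"
      using dist_le_pi_dist[of \<Gamma> u v V E] by (auto simp: ereal_le_divide_pos ereal_divide_le_pos)
  qed
  have "spanning_ratio V E \<Gamma> = 1 \<longleftrightarrow> (\<forall>p\<in>?P. ?r p \<le> 1)"
  proof
    assume "\<forall>p\<in>?P. ?r p \<le> 1"
    moreover have "1 \<le> ?r (x, y)"
      using ratio(1) assms by blast
    ultimately show "spanning_ratio V E \<Gamma> = 1"
      unfolding spanning_ratio_def using assms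
      by (intro antisym SUP_least SUP_upper2[of "(x, y)"]) auto
  next
    assume sr: "spanning_ratio V E \<Gamma> = 1"
    show "\<forall>p\<in>?P. ?r p \<le> 1"
    proof
      fix p assume "p \<in> ?P"
      then have "?r p \<le> spanning_ratio V E \<Gamma>"
        unfolding spanning_ratio_def by (rule SUP_upper)
      then show "?r p \<le> 1"
        using sr by simp
    qed
  qed
  then show ?thesis
    using ratio(2) by auto
qed

lemma pi_dist_eq_dist_along_path:
  assumes path: "is_path V E ps" and e: "norm e = 1"
    and \<Gamma>: "\<And>k. k < length ps \<Longrightarrow> \<Gamma> (ps ! k) = real k *\<^sub>R e"
    and "i < length ps" "j < length ps"
  shows "pi_dist V E \<Gamma> (ps ! i) (ps ! j) = ereal (dist (\<Gamma> (ps ! i)) (\<Gamma> (ps ! j)))"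
proof -
  have dist_nth: "dist (\<Gamma> (ps ! k)) (\<Gamma> (ps ! l)) = \<bar>real k - real l\<bar>"
    if "k < length ps" "l < length ps" for k l
    using e that by (simp add: \<Gamma> dist_norm flip: scaleR_diff_left)
  have pi_dist_le: "pi_dist V E \<Gamma> (ps ! i) (ps ! j) \<le> ereal (dist (\<Gamma> (ps ! i)) (\<Gamma> (ps ! j)))"
    if "i \<le> j" "j < length ps" for i j
  proof -
    let ?qs = "take (Suc (j - i)) (drop i ps)"
    have "path_len \<Gamma> ?qs = (\<Sum>k<j - i. 1)"
      unfolding path_len_take_drop[OF that] using that by (intro sum.cong) (simp_all add: dist_nth)
    then have "path_len \<Gamma> ?qs = dist (\<Gamma> (ps ! i)) (\<Gamma> (ps ! j))"
      using that by (simp add: dist_nth)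
    moreover have "hd ?qs = ps ! i" "last ?qs = ps ! j"
      using that by (simp_all add: hd_drop_conv_nth last_conv_nth)
    ultimately show ?thesis
      using pi_dist_le_path_len[OF is_path_take_drop[OF path that], of \<Gamma>] by simp
  qed
  have "pi_dist V E \<Gamma> (ps ! i) (ps ! j) \<le> ereal (dist (\<Gamma> (ps ! i)) (\<Gamma> (ps ! j)))"
    using pi_dist_le[of i j] pi_dist_le[of j i] assms(4,5)
    by (cases "i \<le> j") (simp_all add: pi_dist_commute dist_commute)
  then show ?thesis
    using dist_le_pi_dist by (rule antisym)
qed

lemma ex_injective_drawing_along_list:
  assumes "distinct ps"
  obtains \<Gamma> :: "'a \<Rightarrow> real^2"
  where "inj_on \<Gamma> (set ps)" "\<And>k. k < length ps \<Longrightarrow> \<Gamma> (ps ! k) = real k *\<^sub>R axis 1 1"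
proof -
  define \<Gamma> :: "'a \<Rightarrow> real^2"
    where "\<Gamma> x = real (the_inv_into {..<length ps} ((!) ps) x) *\<^sub>R axis 1 1" for x
  have inj_nth: "inj_on ((!) ps) {..<length ps}"
    using assms by (simp add: inj_on_nth)
  have "set ps = (!) ps ` {..<length ps}"
    by (auto simp: in_set_conv_nth)
  then have "inj_on (the_inv_into {..<length ps} ((!) ps)) (set ps)"
    using inj_on_the_inv_into[OF inj_nth] by simp
  moreover have "inj (\<lambda>n. real n *\<^sub>R (axis 1 1 :: real^2))"
    by (rule injI) simp
  ultimately have "inj_on \<Gamma> (set ps)"
    unfolding \<Gamma>_def inj_on_def inj_def by blast
  moreover have "\<Gamma> (ps ! k) = real k *\<^sub>R axis 1 1" if "k < length ps" for k
    using the_inv_into_f_f[OF inj_nth] that by (simp add: \<Gamma>_def)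
  ultimately show ?thesis
    using that by blast
qed

lemma segment_path_if_pi_dist_eq_dist:
  assumes "finite V" and "pi_dist V E \<Gamma> u v = ereal (dist (\<Gamma> u) (\<Gamma> v))"
  shows "\<exists>ps. is_path V E ps \<and> hd ps = u \<and> last ps = v \<and>
    \<Gamma> ` set ps \<subseteq> closed_segment (\<Gamma> u) (\<Gamma> v)"
proof -
  have "pi_dist V E \<Gamma> u v \<noteq> \<infinity>"
    using assms(2) by simp
  then obtain ps where ps: "is_path V E ps" "hd ps = u" "last ps = v"
    and "pi_dist V E \<Gamma> u v = ereal (path_len \<Gamma> ps)"
    by (rule pi_dist_attained[OF assms(1)])
  then have "path_len \<Gamma> ps \<le> dist (\<Gamma> (hd ps)) (\<Gamma> (last ps))"
    using assms(2) by simp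
  then have "\<Gamma> z \<in> closed_segment (\<Gamma> u) (\<Gamma> v)" if "z \<in> set ps" for z
    using on_segment_if_path_len_le_dist[OF _ that] ps(2,3) by simp
  then show ?thesis
    using ps by blast
qed

lemma edge_if_no_vertex_projects_between:
  fixes \<Gamma> :: "'a \<Rightarrow> real^2" and f :: "real^2 \<Rightarrow> real"
  assumes f: "linear f" and inj: "inj_on (f \<circ> \<Gamma>) V"
    and ab: "a \<in> V" "b \<in> V" "f (\<Gamma> a) < f (\<Gamma> b)"
    and gap: "\<And>y. y \<in> V \<Longrightarrow> f (\<Gamma> y) \<le> f (\<Gamma> a) \<or> f (\<Gamma> b) \<le> f (\<Gamma> y)"
    and qs: "is_path V E qs" "hd qs = a" "last qs = b"
    and on_segment: "\<Gamma> ` set qs \<subseteq> closed_segment (\<Gamma> a) (\<Gamma> b)"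
  shows "{a, b} \<in> E"
proof -
  have "y \<in> {a, b}" if y: "y \<in> set qs" for y
  proof -
    have "y \<in> V"
      using qs(1) y by (auto simp: is_path_def)
    have "f (\<Gamma> y) \<in> closed_segment (f (\<Gamma> a)) (f (\<Gamma> b))"
      using on_segment y closed_segment_linear_image[OF f] by auto
    then have "f (\<Gamma> a) \<le> f (\<Gamma> y)" "f (\<Gamma> y) \<le> f (\<Gamma> b)"
      using ab(3) by (simp_all add: closed_segment_eq_real_ivl)
    then have "(f \<circ> \<Gamma>) y = (f \<circ> \<Gamma>) a \<or> (f \<circ> \<Gamma>) y = (f \<circ> \<Gamma>) b"
      using gap[OF \<open>y \<in> V\<close>] by auto
    then show ?thesis
      using inj_onD[OF inj _ \<open>y \<in> V\<close> ab(1)] inj_onD[OF inj _ \<open>y \<in> V\<close> ab(2)] by blast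
  qed
  moreover have "a \<noteq> b"
    using ab(3) by auto
  ultimately show ?thesis
    using edge_if_path_set_subset_ends[OF qs] by blast
qed

lemma hamiltonian_path_if_segment_paths:
  fixes \<Gamma> :: "'a \<Rightarrow> real^2"
  assumes "finite V" and "V \<noteq> {}" and "inj_on \<Gamma> V"
    and segment_path: "\<And>u v. u \<in> V \<Longrightarrow> v \<in> V \<Longrightarrow> u \<noteq> v \<Longrightarrow>
      \<exists>ps. is_path V E ps \<and> hd ps = u \<and> last ps = v \<and> \<Gamma> ` set ps \<subseteq> closed_segment (\<Gamma> u) (\<Gamma> v)"
  shows "\<exists>ps. hamiltonian_path V E ps"
proof -
  obtain f :: "real^2 \<Rightarrow> real" where f: "linear f" "inj_on f (\<Gamma> ` V)"
    using ex_linear_inj_on_finite assms(1) by (metis finite_imageI)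
  have inj: "inj_on (f \<circ> \<Gamma>) V"
    using assms(3) f(2) by (rule comp_inj_on)
  obtain xs where "set xs = V" "distinct xs"
    using finite_distinct_list[OF assms(1)] by blast
  define ps where "ps = sort_key (f \<circ> \<Gamma>) xs"
  have set_ps: "set ps = V" and "distinct ps" and sorted: "sorted (map (f \<circ> \<Gamma>) ps)"
    using \<open>set xs = V\<close> \<open>distinct xs\<close> by (simp_all add: ps_def)
  then have strict: "sorted_wrt (<) (map (f \<circ> \<Gamma>) ps)"
    using inj by (simp add: strict_sorted_iff distinct_map)
  have "{ps ! i, ps ! Suc i} \<in> E" if i: "Suc i < length ps" for i
  proof -
    have ab: "ps ! i \<in> V" "ps ! Suc i \<in> V" "f (\<Gamma> (ps ! i)) < f (\<Gamma> (ps ! Suc i))"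
      using i set_ps sorted_wrt_nth_less[OF strict, of i "Suc i"] by auto
    have gap: "f (\<Gamma> y) \<le> f (\<Gamma> (ps ! i)) \<or> f (\<Gamma> (ps ! Suc i)) \<le> f (\<Gamma> y)" if "y \<in> V" for y
      using sorted_nth_Suc_gap[OF sorted, of i "f (\<Gamma> y)"] i set_ps that by simp
    obtain qs where "is_path V E qs" "hd qs = ps ! i" "last qs = ps ! Suc i"
      "\<Gamma> ` set qs \<subseteq> closed_segment (\<Gamma> (ps ! i)) (\<Gamma> (ps ! Suc i))"
      using segment_path[OF ab(1,2)] ab(3) by force
    then show ?thesis
      using edge_if_no_vertex_projects_between[OF f(1) inj ab gap] by blast
  qed
  moreover have "ps \<noteq> []"
    using set_ps assms(2) by auto
  ultimately have "hamiltonian_path V E ps"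
    using set_ps \<open>distinct ps\<close> by (auto simp: hamiltonian_path_def is_path_def)
  then show ?thesis ..
qed

lemma hamiltonian_path_if_spanning_ratio_1:
  assumes "finite V" and "inj_on \<Gamma> V" and "spanning_ratio V E \<Gamma> = 1"
    and "x \<in> V" "y \<in> V" "x \<noteq> y"
  shows "\<exists>ps. hamiltonian_path V E ps"
proof (rule hamiltonian_path_if_segment_paths[OF assms(1) _ assms(2)])
  show "V \<noteq> {}"
    using assms(4) by auto
  have "\<forall>u\<in>V. \<forall>v\<in>V. u \<noteq> v \<longrightarrow> pi_dist V E \<Gamma> u v = ereal (dist (\<Gamma> u) (\<Gamma> v))"
    using spanning_ratio_eq_1_iff[OF assms(2,4-6)] assms(3) by blast
  then show "\<exists>ps. is_path V E ps \<and> hd ps = u \<and> last ps = v \<and> \<Gamma> ` set ps \<subseteq> closed_segment (\<Gamma> u) (\<Gamma> v)"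
    if "u \<in> V" "v \<in> V" "u \<noteq> v" for u v
    using segment_path_if_pi_dist_eq_dist[OF assms(1)] that by blast
qed

lemma spanning_ratio_1_drawing_if_hamiltonian_path:
  assumes "hamiltonian_path V E ps" and "x \<in> V" "y \<in> V" "x \<noteq> y"
  shows "\<exists>\<Gamma>. straight_line_drawing V \<Gamma> \<and> spanning_ratio V E \<Gamma> = 1"
proof -
  have path: "is_path V E ps" and set_ps: "set ps = V" and "distinct ps"
    using assms(1) by (auto simp: hamiltonian_path_def is_path_def)
  obtain \<Gamma> :: "'a \<Rightarrow> real^2" where inj: "inj_on \<Gamma> (set ps)"
    and on_line: "\<And>k. k < length ps \<Longrightarrow> \<Gamma> (ps ! k) = real k *\<^sub>R axis 1 1"
    using ex_injective_drawing_along_list[OF \<open>distinct ps\<close>] by metis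
  have "pi_dist V E \<Gamma> u v = ereal (dist (\<Gamma> u) (\<Gamma> v))" if "u \<in> set ps" "v \<in> set ps" for u v
    using that pi_dist_eq_dist_along_path[OF path norm_axis_1 on_line]
    by (auto simp: in_set_conv_nth)
  then have "spanning_ratio V E \<Gamma> = 1"
    using spanning_ratio_eq_1_iff[OF _ assms(2-4)] inj set_ps by blast
  then show ?thesis
    using inj set_ps by (auto simp: straight_line_drawing_def)
qed

theorem lemma1:
  fixes V :: "'a set" and E :: "'a set set"
  assumes "graph V E" and "card V \<ge> 2"
  shows "(\<exists>\<Gamma>. straight_line_drawing V \<Gamma> \<and> spanning_ratio V E \<Gamma> = 1) \<longleftrightarrow>
         (\<exists>ps. hamiltonian_path V E ps)"
proof -
  have "finite V"
    using assms(1) by (simp add: graph_def)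
  obtain x y where xy: "x \<in> V" "y \<in> V" "x \<noteq> y"
    using assms(2) by (metis card_2_iff' card_le_Suc_iff numeral_2_eq_2 insertCI)
  show ?thesis
    using hamiltonian_path_if_spanning_ratio_1[OF \<open>finite V\<close> _ _ xy]
      spanning_ratio_1_drawing_if_hamiltonian_path[OF _ xy]
    by (auto simp: straight_line_drawing_def)
qed

end
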